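(* Let $(G,H,T)$ be a loop folder such that $T$ is invariant under conjugation by $H$. Suppose $t\in T$ is such that $Ht$ is also a left coset of $H$, i.e. there is $g\in G$ with $Ht=gH$ (this holds in particular if $t$ normalizes $H$). Then $[t,H]=1$.
   Context: A loop folder is a triple $(G,H,T)$ with $G$ a finite group, $H\le G$, and $T\subseteq G$ with $1\in T$ such that $T$ is a set of representatives for the right cosets $H^g\backslash G$ for every $g\in G$. *)

theory Defs
  imports "HOL-Algebra.Algebra"
begin

definition conj_set :: "('a, 'b) monoid_scheme \<Rightarrow> 'a set \<Rightarrow> 'a \<Rightarrow> 'a set" where
  "conj_set G H g = (\<lambda>h. inv\<^bsub>G\<^esub> g \<otimes>\<^bsub>G\<^esub> h \<otimes>\<^bsub>G\<^esub> g) ` H"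

definition right_transversal :: "('a, 'b) monoid_scheme \<Rightarrow> 'a set \<Rightarrow> 'a set \<Rightarrow> bool" where
  "right_transversal G K T \<longleftrightarrow> T \<subseteq> carrier G \<and>
     (\<forall>x\<in>carrier G. \<exists>!t. t \<in> T \<and> t \<in> K #>\<^bsub>G\<^esub> x)"

definition loop_folder :: "('a, 'b) monoid_scheme \<Rightarrow> 'a set \<Rightarrow> 'a set \<Rightarrow> bool" where
  "loop_folder G H T \<longleftrightarrow> group G \<and> finite (carrier G) \<and> subgroup H G \<and>
     T \<subseteq> carrier G \<and> \<one>\<^bsub>G\<^esub> \<in> T \<and>
     (\<forall>g\<in>carrier G. right_transversal G (conj_set G H g) T)"

end

theory Submission
  imports Defs
begin

text \<open>Taking \<open>g = 1\<close> shows that \<open>T\<close> is a right transversal of \<open>H\<close> itself.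
  If \<open>Ht\<close> is a left coset, it is the left coset \<open>tH\<close>, so \<open>t\<close> normalizes \<open>H\<close>
  and every conjugate \<open>h\<inverse> t h\<close> (\<open>h \<in> H\<close>) lies in \<open>Ht\<close>.
  By \<open>H\<close>-invariance it also lies in \<open>T\<close>, so it is the unique representative
  \<open>t\<close> of \<open>Ht\<close>.\<close>

lemma (in group) conj_set_one:
  assumes "H \<subseteq> carrier G"
  shows "conj_set G H \<one> = H"
proof -
  have "(\<lambda>h. inv \<one> \<otimes> h \<otimes> \<one>) ` H = id ` H"
    using assms by (intro image_cong) auto
  then show ?thesis
    unfolding conj_set_def by simp
qed

lemma loop_folder_right_transversal:
  fixes G (structure)
  assumes "loop_folder G H T"
  shows "right_transversal G H T"
proof -
  interpret group G
    using assms unfolding loop_folder_def by blast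
  have "subgroup H G" and "right_transversal G (conj_set G H \<one>) T"
    using assms unfolding loop_folder_def by auto
  then show ?thesis
    using conj_set_one[OF subgroup.subset] by simp
qed

lemma (in group) right_transversal_unique:
  assumes "right_transversal G K T" and "subgroup K G"
    and "s \<in> T" and "t \<in> T" and "s \<in> K #> t"
  shows "s = t"
proof -
  have "t \<in> carrier G"
    using assms(1,4) unfolding right_transversal_def by blast
  then have "\<exists>!u. u \<in> T \<and> u \<in> K #> t" and "t \<in> K #> t"
    using assms(1,2) rcos_self unfolding right_transversal_def by auto
  then show ?thesis
    using assms(3-5) by blast
qed

lemma (in group) rcos_eq_lcos_self:
  assumes "subgroup H G" and "t \<in> carrier G" and "g \<in> carrier G"
    and "H #> t = g <# H"
  shows "H #> t = t <# H"
proof -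
  have "t \<in> g <# H"
    using assms(4) rcos_self[OF assms(2,1)] by simp
  then show ?thesis
    using assms(4) l_repr_independence[OF _ assms(3,1)] by simp
qed

lemma (in group) conj_mem_rcos_self:
  assumes H: "subgroup H G" and tG: "t \<in> carrier G" and "H #> t = t <# H" and hH: "h \<in> H"
  shows "inv h \<otimes> t \<otimes> h \<in> H #> t"
proof -
  have hG: "h \<in> carrier G"
    by (rule subgroup.mem_carrier[OF H hH])
  have "t \<otimes> h \<in> t <# H"
    using hH unfolding l_coset_def by blast
  then have "t \<otimes> h \<in> H #> t"
    by (simp only: assms(3))
  then obtain h' where h'H: "h' \<in> H" and th: "t \<otimes> h = h' \<otimes> t"
    unfolding r_coset_def by blast
  have h'G: "h' \<in> carrier G"
    by (rule subgroup.mem_carrier[OF H h'H])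
  have "inv h \<otimes> t \<otimes> h = inv h \<otimes> (t \<otimes> h)"
    by (rule m_assoc[OF inv_closed[OF hG] tG hG])
  also have "\<dots> = (inv h \<otimes> h') \<otimes> t"
    unfolding th by (rule m_assoc[OF inv_closed[OF hG] h'G tG, symmetric])
  also have "\<dots> \<in> H #> t"
    by (rule rcosI[OF subgroup.m_closed[OF H subgroup.m_inv_closed[OF H hH] h'H]
          subgroup.subset[OF H] tG])
  finally show ?thesis .
qed

lemma (in group) commute_if_conj_eq:
  assumes "h \<in> carrier G" and "t \<in> carrier G" and "inv h \<otimes> t \<otimes> h = t"
  shows "t \<otimes> h = h \<otimes> t"
proof -
  have "t \<otimes> h = h \<otimes> (inv h \<otimes> t \<otimes> h)"
    using assms(1,2) by (simp add: m_assoc[symmetric])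
  then show ?thesis
    using assms(3) by simp
qed

theorem lemma3p2:
  fixes G (structure)
  assumes "loop_folder G H T"
    and "\<forall>h\<in>H. \<forall>s\<in>T. inv h \<otimes> s \<otimes> h \<in> T"
    and "t \<in> T"
    and "\<exists>g\<in>carrier G. H #> t = g <# H"
  shows "\<forall>h\<in>H. t \<otimes> h = h \<otimes> t"
proof
  fix h
  assume hH: "h \<in> H"
  interpret group G
    using assms(1) unfolding loop_folder_def by blast
  have H: "subgroup H G" and tG: "t \<in> carrier G"
    using assms(1,3) unfolding loop_folder_def by auto
  have "H #> t = t <# H"
    using assms(4) rcos_eq_lcos_self[OF H tG] by blast
  then have "inv h \<otimes> t \<otimes> h \<in> H #> t"
    using conj_mem_rcos_self[OF H tG _ hH] by blast
  then have "inv h \<otimes> t \<otimes> h = t"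
    using right_transversal_unique[OF loop_folder_right_transversal[OF assms(1)] H]
      assms(2,3) hH by blast
  then show "t \<otimes> h = h \<otimes> t"
    using commute_if_conj_eq[OF subgroup.mem_carrier[OF H hH] tG] by simp
qed

end
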